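(* There exist a function $g:\mathbb{N}\to\mathbb{R}$ with $g(n)=o(n)$ and, for every $n\ge 1$, an injective map from the set of Left-Leaning AVL trees with $n$ nodes to the set of finite binary strings such that every codeword has length at most $0.5912\,n+g(n)$. In words: there is an encoding of Left-Leaning AVL trees using at most $0.5912n+o(n)$ bits for Left-Leaning AVL trees with $n$ nodes.
   Context: A binary tree is a rooted tree in which every node has an (optional) left child and an (optional) right child. The height of a tree is the number of edges on a longest path from the root to a leaf; the empty tree has height $-1$. An AVL tree is a binary tree such that at every node the heights of the left and right subtrees differ by at most $1$ (empty subtrees included). A Left-Leaning AVL tree is an AVL tree in which, at every node, the height of the left subtree is at least the height of the right subtree. *)

theory Defs
  imports Main "HOL-Library.Landau_Symbols"
begin

datatype btree = Leaf | Node btree btree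

fun nodes :: "btree \<Rightarrow> nat" where
  "nodes Leaf = 0"
| "nodes (Node l r) = nodes l + nodes r + 1"

text \<open>Height in edges; the empty tree has height -1.\<close>
fun ht :: "btree \<Rightarrow> int" where
  "ht Leaf = -1"
| "ht (Node l r) = max (ht l) (ht r) + 1"

fun avl :: "btree \<Rightarrow> bool" where
  "avl Leaf = True"
| "avl (Node l r) = (\<bar>ht l - ht r\<bar> \<le> 1 \<and> avl l \<and> avl r)"

fun ll_avl :: "btree \<Rightarrow> bool" where
  "ll_avl Leaf = True"
| "ll_avl (Node l r) = (\<bar>ht l - ht r\<bar> \<le> 1 \<and> ht l \<ge> ht r \<and> ll_avl l \<and> ll_avl r)"

end

theory Submission
  imports Defs Complex_Main
begin

text \<open>
  Give a tree with \<open>n\<close> nodes the weight \<open>(2/3)^n\<close>. A Left-Leaning AVL tree of height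
  \<open>h + 2\<close> is a root over a left subtree of height \<open>h + 1\<close> and a right subtree of height
  \<open>h + 1\<close> or \<open>h\<close>, so the total weights \<open>w\<^sub>h\<close> of the trees of height \<open>h\<close> satisfy
  \<open>w\<^sub>h\<^sub>+\<^sub>2 = 2/3 \<cdot> w\<^sub>h\<^sub>+\<^sub>1 (w\<^sub>h\<^sub>+\<^sub>1 + w\<^sub>h)\<close>. Since \<open>2/3 \<cdot> 3/4 \<cdot> (3/4 + 3/4) = 3/4\<close>, all
  \<open>w\<^sub>h\<close> stay below \<open>1\<close>; hence for each of the at most \<open>n + 1\<close> possible heights there are
  at most \<open>(3/2)^n\<close> such trees with \<open>n\<close> nodes. Numbering all of them in binary takes
  \<open>n log\<^sub>2(3/2) + O(log n)\<close> bits, and \<open>log\<^sub>2(3/2) < 0.5912\<close>.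
\<close>

lemma ht_ge_minus_one: "ht t \<ge> -1"
  by (induction t) auto

lemma ht_eq_minus_one_iff: "ht t = -1 \<longleftrightarrow> t = Leaf"
proof (cases t)
  case (Node l r)
  with ht_ge_minus_one[of l] show ?thesis by simp
qed simp

lemma ht_less_nodes: "ht t < int (nodes t)"
  by (induction t) auto

text \<open>Level \<open>k\<close> holds the trees of height \<open>k - 1\<close>, so that the empty tree gets a natural index.\<close>
definition ll_avl_level :: "nat \<Rightarrow> btree set" where
  "ll_avl_level k = {t. ll_avl t \<and> ht t = int k - 1}"

lemma ll_avl_level_0: "ll_avl_level 0 = {Leaf}"
  by (auto simp: ll_avl_level_def ht_eq_minus_one_iff)

lemma ll_avl_level_1: "ll_avl_level (Suc 0) = {Node Leaf Leaf}"
proof (intro set_eqI iffI)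
  fix t assume "t \<in> ll_avl_level (Suc 0)"
  then obtain l r where "t = Node l r" "max (ht l) (ht r) = -1"
    by (cases t) (auto simp: ll_avl_level_def)
  with ht_ge_minus_one[of l] ht_ge_minus_one[of r] show "t \<in> {Node Leaf Leaf}"
    by (simp add: max_def ht_eq_minus_one_iff split: if_splits)
qed (simp add: ll_avl_level_def)

lemma Leaf_notin_ll_avl_level_Suc: "Leaf \<notin> ll_avl_level (Suc k)"
  by (simp add: ll_avl_level_def)

lemma Node_in_ll_avl_level_Suc_Suc_iff:
  "Node l r \<in> ll_avl_level (Suc (Suc k)) \<longleftrightarrow>
     l \<in> ll_avl_level (Suc k) \<and> r \<in> ll_avl_level (Suc k) \<union> ll_avl_level k"
  by (auto simp: ll_avl_level_def max_def abs_le_iff)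

lemma ll_avl_level_Suc_Suc:
  "ll_avl_level (Suc (Suc k)) =
     (\<lambda>(l, r). Node l r) ` (ll_avl_level (Suc k) \<times> (ll_avl_level (Suc k) \<union> ll_avl_level k))"
    (is "_ = ?Node ` ?pairs")
proof (intro set_eqI iffI)
  fix t assume "t \<in> ll_avl_level (Suc (Suc k))"
  then obtain l r where "t = Node l r" "(l, r) \<in> ?pairs"
    using Leaf_notin_ll_avl_level_Suc Node_in_ll_avl_level_Suc_Suc_iff by (cases t) auto
  then show "t \<in> ?Node ` ?pairs" by force
qed (auto simp: Node_in_ll_avl_level_Suc_Suc_iff)

lemma finite_ll_avl_level: "finite (ll_avl_level k)"
proof -
  have "finite (ll_avl_level k) \<and> finite (ll_avl_level (Suc k))"
    by (induction k) (simp_all add: ll_avl_level_0 ll_avl_level_1 ll_avl_level_Suc_Suc)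
  then show ?thesis ..
qed

lemma ll_avl_level_Suc_disjoint: "ll_avl_level (Suc k) \<inter> ll_avl_level k = {}"
  by (auto simp: ll_avl_level_def)

definition level_weight :: "real \<Rightarrow> nat \<Rightarrow> real" where
  "level_weight x k = (\<Sum>t\<in>ll_avl_level k. x ^ nodes t)"

lemma level_weight_0: "level_weight x 0 = 1"
  by (simp add: level_weight_def ll_avl_level_0)

lemma level_weight_1: "level_weight x (Suc 0) = x"
  by (simp add: level_weight_def ll_avl_level_1)

lemma level_weight_nonneg: "x \<ge> 0 \<Longrightarrow> level_weight x k \<ge> 0"
  by (simp add: level_weight_def sum_nonneg)

lemma level_weight_Suc_Suc:
  "level_weight x (Suc (Suc k)) =
     x * level_weight x (Suc k) * (level_weight x (Suc k) + level_weight x k)"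
proof -
  let ?L = "ll_avl_level" and ?w = "\<lambda>t. x ^ nodes t"
  have "inj_on (\<lambda>(l, r). Node l r) (?L (Suc k) \<times> (?L (Suc k) \<union> ?L k))"
    by (auto simp: inj_on_def)
  then have "level_weight x (Suc (Suc k)) =
      (\<Sum>(l, r)\<in>?L (Suc k) \<times> (?L (Suc k) \<union> ?L k). x * (?w l * ?w r))"
    by (simp add: level_weight_def ll_avl_level_Suc_Suc sum.reindex case_prod_unfold
        power_add mult_ac)
  also have "\<dots> = x * ((\<Sum>l\<in>?L (Suc k). ?w l) * (\<Sum>r\<in>?L (Suc k) \<union> ?L k. ?w r))"
    unfolding sum_product by (simp only: sum.cartesian_product[symmetric] sum_distrib_left)
  also have "(\<Sum>r\<in>?L (Suc k) \<union> ?L k. ?w r) = level_weight x (Suc k) + level_weight x k"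
    by (simp add: level_weight_def sum.union_disjoint finite_ll_avl_level
        ll_avl_level_Suc_disjoint)
  finally show ?thesis by (simp add: level_weight_def mult.assoc)
qed

lemma level_weight_Suc_le:
  assumes "0 \<le> x" "x \<le> 2/3"
  shows "level_weight x (Suc k) \<le> 3/4"
proof -
  have "level_weight x (Suc k) \<le> 3/4 \<and> level_weight x (Suc (Suc k)) \<le> 3/4"
  proof (induction k)
    case 0
    have "x * x * (x + 1) \<le> 2/3 * (2/3) * (2/3 + 1)"
      using assms by (intro mult_mono add_mono) auto
    with assms show ?case by (simp add: level_weight_Suc_Suc level_weight_0 level_weight_1)
  next
    case (Suc k)
    let ?a = "level_weight x (Suc k)" and ?b = "level_weight x (Suc (Suc k))"
    have "x * ?b * (?b + ?a) \<le> 2/3 * (3/4) * (3/4 + 3/4)"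
      using Suc.IH assms level_weight_nonneg[of x] by (intro mult_mono add_mono) auto
    with Suc.IH show ?case by (simp add: level_weight_Suc_Suc[of x "Suc k"])
  qed
  then show ?thesis ..
qed

lemma level_weight_le_one:
  assumes "0 \<le> x" "x \<le> 2/3"
  shows "level_weight x k \<le> 1"
proof (cases k)
  case (Suc j)
  with level_weight_Suc_le[OF assms, of j] show ?thesis by simp
qed (simp add: level_weight_0)

lemma card_ll_avl_level_nodes_le:
  "real (card {t \<in> ll_avl_level k. nodes t = n}) \<le> (3/2) ^ n"
proof -
  have "real (card {t \<in> ll_avl_level k. nodes t = n}) * (2/3) ^ n =
      (\<Sum>t \<in> {t \<in> ll_avl_level k. nodes t = n}. (2/3) ^ nodes t)"
    by simp
  also have "\<dots> \<le> level_weight (2/3) k"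
    unfolding level_weight_def by (intro sum_mono2 finite_ll_avl_level) auto
  also have "\<dots> \<le> 1"
    by (rule level_weight_le_one) auto
  finally have "real (card {t \<in> ll_avl_level k. nodes t = n}) \<le> 1 / (2/3) ^ n"
    by (simp add: pos_le_divide_eq)
  then show ?thesis
    by (simp add: power_divide)
qed

lemma ll_avl_nodes_eq_UN_level:
  "{t. ll_avl t \<and> nodes t = n} = (\<Union>k\<le>n. {t \<in> ll_avl_level k. nodes t = n})"
proof (intro set_eqI iffI)
  fix t assume t: "t \<in> {t. ll_avl t \<and> nodes t = n}"
  have "nat (ht t + 1) \<le> n" "t \<in> ll_avl_level (nat (ht t + 1))"
    using t ht_less_nodes[of t] ht_ge_minus_one[of t] by (auto simp: ll_avl_level_def)
  with t show "t \<in> (\<Union>k\<le>n. {t \<in> ll_avl_level k. nodes t = n})" by auto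
qed (auto simp: ll_avl_level_def)

lemma finite_ll_avl_nodes: "finite {t. ll_avl t \<and> nodes t = n}"
  unfolding ll_avl_nodes_eq_UN_level by (simp add: finite_ll_avl_level)

lemma card_ll_avl_nodes_le:
  "real (card {t. ll_avl t \<and> nodes t = n}) \<le> (real n + 1) * (3/2) ^ n"
proof -
  have "card {t. ll_avl t \<and> nodes t = n} \<le> (\<Sum>k\<le>n. card {t \<in> ll_avl_level k. nodes t = n})"
    unfolding ll_avl_nodes_eq_UN_level by (rule card_UN_le) simp
  then have "real (card {t. ll_avl t \<and> nodes t = n}) \<le>
      (\<Sum>k\<le>n. real (card {t \<in> ll_avl_level k. nodes t = n}))"
    unfolding of_nat_sum[symmetric] by (rule of_nat_mono)
  also have "\<dots> \<le> (\<Sum>k\<le>n. (3/2) ^ n)"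
    by (intro sum_mono card_ll_avl_level_nodes_le)
  finally show ?thesis by (simp add: add.commute)
qed

lemma three_halves_le_two_powr: "3/2 \<le> (2::real) powr 0.5912"
proof -
  have "(3/2::real) ^ 22 \<le> 2 ^ 13"
    by (simp add: power_divide)
  also have "(2::real) ^ 13 = (2 powr (13/22)) ^ 22"
    by (simp add: powr_power powr_numeral)
  finally have "3/2 \<le> (2::real) powr (13/22)"
    by (subst (asm) power_mono_iff) auto
  also have "\<dots> \<le> 2 powr 0.5912"
    by (intro powr_mono) auto
  finally show ?thesis .
qed

lemma card_ll_avl_nodes_le_powr:
  "real (card {t. ll_avl t \<and> nodes t = n}) \<le> 2 powr (0.5912 * real n + log 2 (real n + 1))"
proof -
  have "real (card {t. ll_avl t \<and> nodes t = n}) \<le> (real n + 1) * (3/2) ^ n"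
    by (rule card_ll_avl_nodes_le)
  also have "\<dots> \<le> (real n + 1) * (2 powr 0.5912) ^ n"
    using three_halves_le_two_powr by (intro mult_left_mono power_mono) auto
  also have "\<dots> = 2 powr (0.5912 * real n + log 2 (real n + 1))"
    by (simp add: powr_add powr_power mult.commute)
  finally show ?thesis .
qed

lemma ex_inj_on_bool_lists_length:
  assumes "finite A" "card A \<le> 2 ^ m"
  obtains enc :: "'a \<Rightarrow> bool list" where "inj_on enc A" "\<And>a. a \<in> A \<Longrightarrow> length (enc a) = m"
proof -
  have "card {xs :: bool list. length xs = m} = 2 ^ m"
    using card_lists_length_eq[of "UNIV :: bool set" m] by simp
  with assms obtain enc where "enc ` A \<subseteq> {xs :: bool list. length xs = m}" "inj_on enc A"
    using card_le_inj[of A "{xs :: bool list. length xs = m}"]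
      finite_lists_length_eq[of "UNIV :: bool set" m]
    by auto
  with that show ?thesis by blast
qed

lemma ex_inj_on_bool_lists_length_le:
  assumes "finite A" "real (card A) \<le> 2 powr x" "0 \<le> x"
  obtains enc :: "'a \<Rightarrow> bool list"
  where "inj_on enc A" "\<And>a. a \<in> A \<Longrightarrow> real (length (enc a)) \<le> x + 1"
proof -
  define m where "m = nat \<lceil>x\<rceil>"
  have "2 powr x \<le> 2 powr real m"
    unfolding m_def by (intro powr_mono) linarith+
  with assms(2) have "real (card A) \<le> 2 powr real m"
    by (rule order_trans)
  then have "card A \<le> 2 ^ m"
    by (simp add: powr_realpow)
  then obtain enc :: "'a \<Rightarrow> bool list"
    where "inj_on enc A" "\<And>a. a \<in> A \<Longrightarrow> length (enc a) = m"
    using ex_inj_on_bool_lists_length[OF assms(1)] by blast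
  moreover have "real m \<le> x + 1"
    unfolding m_def using assms(3) by linarith
  ultimately show ?thesis
    using that by simp
qed

lemma log_plus_one_smallo: "(\<lambda>n. log 2 (real n + 1) + 1) \<in> o(\<lambda>n. real n)"
proof (rule smalloI_tendsto)
  have "filterlim (\<lambda>n. real n + 1) at_top sequentially"
    by (rule filterlim_at_top_mono[OF filterlim_real_sequentially]) simp
  then have "(\<lambda>n. ln (real n + 1) / (real n + 1)) \<longlonglongrightarrow> 0"
    using filterlim_compose[OF ln_x_over_x_tendsto_0] by blast
  then have "(\<lambda>n. ln (real n + 1) / (real n + 1) * ((real n + 1) / real n) / ln 2 + 1 / real n)
      \<longlonglongrightarrow> 0 * 1 / ln 2 + 0"
    using LIMSEQ_Suc_n_over_n by (intro tendsto_intros lim_1_over_n) (simp_all add: add.commute)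
  moreover have "\<forall>\<^sub>F n in sequentially.
      ln (real n + 1) / (real n + 1) * ((real n + 1) / real n) / ln 2 + 1 / real n =
      (log 2 (real n + 1) + 1) / real n"
  proof (intro eventually_sequentiallyI[of 1])
    fix n :: nat assume "n \<ge> 1"
    then have "ln (real n + 1) / (real n + 1) * ((real n + 1) / real n) = ln (real n + 1) / real n"
      by simp
    then show "ln (real n + 1) / (real n + 1) * ((real n + 1) / real n) / ln 2 + 1 / real n =
        (log 2 (real n + 1) + 1) / real n"
      by (simp add: log_def add_divide_distrib mult.commute)
  qed
  ultimately show "(\<lambda>n. (log 2 (real n + 1) + 1) / real n) \<longlonglongrightarrow> 0"
    by (simp add: tendsto_cong)
  show "\<forall>\<^sub>F n in sequentially. real n \<noteq> 0"
    by (intro eventually_sequentiallyI[of 1]) simp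
qed

theorem corollary1:
  shows "\<exists>g :: nat \<Rightarrow> real. g \<in> o(\<lambda>n. real n) \<and>
    (\<forall>n \<ge> 1. \<exists>enc :: btree \<Rightarrow> bool list.
        inj_on enc {t. ll_avl t \<and> nodes t = n} \<and>
        (\<forall>t \<in> {t. ll_avl t \<and> nodes t = n}.
            real (length (enc t)) \<le> 0.5912 * real n + g n))"
proof -
  have "\<exists>enc :: btree \<Rightarrow> bool list. inj_on enc {t. ll_avl t \<and> nodes t = n} \<and>
      (\<forall>t \<in> {t. ll_avl t \<and> nodes t = n}.
        real (length (enc t)) \<le> 0.5912 * real n + (log 2 (real n + 1) + 1))" for n
  proof -
    obtain enc :: "btree \<Rightarrow> bool list" where "inj_on enc {t. ll_avl t \<and> nodes t = n}"
      and "\<And>t. t \<in> {t. ll_avl t \<and> nodes t = n} \<Longrightarrow>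
        real (length (enc t)) \<le> 0.5912 * real n + log 2 (real n + 1) + 1"
      by (rule ex_inj_on_bool_lists_length_le[OF finite_ll_avl_nodes card_ll_avl_nodes_le_powr])
        auto
    then show ?thesis
      by (auto simp: add.assoc)
  qed
  with log_plus_one_smallo show ?thesis
    by blast
qed

end
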